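(* For all positive integers $n,m$ with $m$ even, there is a deterministic query algorithm which, given an index $j\in[m]$ and query access to an input $x\in\Sigma^M$, makes $\tilde O(n+m)$ queries and accepts if and only if column $j$ is good for $x$, i.e., $g_{n,m}(x)=1$ and $j$ belongs to the set $G$ of condition (4') for $x$.
   Context: Let $n,m$ be positive integers with $m$ even, $M=[n]\times[m]$ (a grid of cells with $n$ rows and $m$ columns), $\tilde M = M\cup\{\bot\}$ (pointers to cells, $\bot$ is the null pointer). Let $T$ be the following fixed binary tree with $m$ leaves and $m-1$ internal nodes: if $m=2^k$, $T$ is the complete binary tree with $2^k$ leaves; if $2^k<m<2^{k+1}$, take the complete binary tree with $2^k$ leaves and add a pair of children to each of its $m-2^k$ leftmost leaves. Outgoing arcs of internal nodes are labeled 'left' and 'right', leaves are labeled $1,\dots,m$ from left to right, and $T(j)$ is the sequence of 'left'/'right' labels on the root-to-leaf-$j$ path. The input alphabet is $\Sigma=\{0,1\}\times\tilde M\times\tilde M\times\tilde M$; for $v\in\Sigma$ its components are $\mathrm{val}(v),\mathrm{lpoint}(v),\mathrm{rpoint}(v),\mathrm{bpoint}(v)$. The function $g_{n,m}\colon\Sigma^M\to\{0,1\}$ is defined by $g_{n,m}(x)=1$ iff: (1) there is exactly one column $b\in[m]$ with $\mathrm{val}(x_{i,b})=1$ for all $i\in[n]$ (the marked column); (2) in column $b$ there is a unique cell $a$ with $x_a\ne(1,\bot,\bot,\bot)$ (the special element); (3) for each column $j\in[m]\setminus\{b\}$, the path starting at $a$ and following $\mathrm{lpoint},\mathrm{rpoint}$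 as specified by $T(j)$ exists (no pointer on it is $\bot$) and ends in a cell $\ell_j$ in column $j$ with $\mathrm{val}(x_{\ell_j})=0$; (4') the set $G=\{j\in[m]\setminus\{b\} : \mathrm{bpoint}(x_{\ell_j})=a\}$ has size exactly $m/2$. A query returns the symbol $x_c\in\Sigma$ of one cell $c\in M$. $\tilde O$ hides factors polylogarithmic in $n,m$. *)

theory Defs
  imports Complex_Main
begin

type_synonym cell = "nat \<times> nat"   (* (row, column), rows in [n], columns in [m] *)
type_synonym ptr = "cell option"     (* None = the null pointer \<bottom> *)
type_synonym sym = "bool \<times> ptr \<times> ptr \<times> ptr"  (* val (True = 1), lpoint, rpoint, bpoint *)

definition grid :: "nat \<Rightarrow> nat \<Rightarrow> cell set" where
  "grid n m = {1..n} \<times> {1..m}"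

definition val :: "sym \<Rightarrow> bool" where "val v = fst v"
definition lpoint :: "sym \<Rightarrow> ptr" where "lpoint v = fst (snd v)"
definition rpoint :: "sym \<Rightarrow> ptr" where "rpoint v = fst (snd (snd v))"
definition bpoint :: "sym \<Rightarrow> ptr" where "bpoint v = snd (snd (snd v))"

text \<open>A symbol of \<Sigma> = {0,1} \<times> M~ \<times> M~ \<times> M~ : all pointers are null or point into M.\<close>
definition valid_sym :: "nat \<Rightarrow> nat \<Rightarrow> sym \<Rightarrow> bool" where
  "valid_sym n m v \<longleftrightarrow>
     (\<forall>c. lpoint v = Some c \<longrightarrow> c \<in> grid n m) \<and>
     (\<forall>c. rpoint v = Some c \<longrightarrow> c \<in> grid n m) \<and>
     (\<forall>c. bpoint v = Some c \<longrightarrow> c \<in> grid n m)"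

text \<open>Inputs x \<in> \<Sigma>^M (values outside M are irrelevant).\<close>
definition valid_input :: "nat \<Rightarrow> nat \<Rightarrow> (cell \<Rightarrow> sym) \<Rightarrow> bool" where
  "valid_input n m x \<longleftrightarrow> (\<forall>c \<in> grid n m. valid_sym n m (x c))"

datatype btree = Lf | Nd btree btree

text \<open>Complete binary tree of depth k whose r leftmost leaves get a pair of children.\<close>
fun ctree :: "nat \<Rightarrow> nat \<Rightarrow> btree" where
  "ctree 0 r = (if r > 0 then Nd Lf Lf else Lf)"
| "ctree (Suc k) r = Nd (ctree k (min r (2^k))) (ctree k (r - 2^k))"

definition tdepth :: "nat \<Rightarrow> nat" where
  "tdepth m = (GREATEST k. 2^k \<le> m)"

definition Ttree :: "nat \<Rightarrow> btree" where
  "Ttree m = ctree (tdepth m) (m - 2 ^ tdepth m)"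

text \<open>Root-to-leaf paths listed by leaves from left to right; False = 'left', True = 'right'.\<close>
fun leaf_paths :: "btree \<Rightarrow> bool list list" where
  "leaf_paths Lf = [[]]"
| "leaf_paths (Nd l r) = map (Cons False) (leaf_paths l) @ map (Cons True) (leaf_paths r)"

text \<open>T(j) for leaf j \<in> [m] (leaves labelled 1..m from left to right).\<close>
definition Tpath :: "nat \<Rightarrow> nat \<Rightarrow> bool list" where
  "Tpath m j = leaf_paths (Ttree m) ! (j - 1)"

fun follow :: "(cell \<Rightarrow> sym) \<Rightarrow> cell \<Rightarrow> bool list \<Rightarrow> cell option" where
  "follow x a [] = Some a"
| "follow x a (d # ds) =
     (case (if d then rpoint (x a) else lpoint (x a)) of
        None \<Rightarrow> None
      | Some c \<Rightarrow> follow x c ds)"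

definition marked_col :: "nat \<Rightarrow> (cell \<Rightarrow> sym) \<Rightarrow> nat \<Rightarrow> bool" where
  "marked_col n x b \<longleftrightarrow> (\<forall>i\<in>{1..n}. val (x (i, b)))"

definition Gset :: "nat \<Rightarrow> (cell \<Rightarrow> sym) \<Rightarrow> nat \<Rightarrow> cell \<Rightarrow> nat set" where
  "Gset m x b a = {j \<in> {1..m} - {b}.
      bpoint (x (the (follow x a (Tpath m j)))) = Some a}"

text \<open>Conditions (1),(2),(3),(4') with marked column b and special element a.\<close>
definition g_conds :: "nat \<Rightarrow> nat \<Rightarrow> (cell \<Rightarrow> sym) \<Rightarrow> nat \<Rightarrow> cell \<Rightarrow> bool" where
  "g_conds n m x b a \<longleftrightarrow>
     b \<in> {1..m} \<and> marked_col n x b \<and>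
     (\<forall>b'\<in>{1..m}. marked_col n x b' \<longrightarrow> b' = b) \<and>
     a \<in> {1..n} \<times> {b} \<and> x a \<noteq> (True, None, None, None) \<and>
     (\<forall>a'\<in>{1..n} \<times> {b}. x a' \<noteq> (True, None, None, None) \<longrightarrow> a' = a) \<and>
     (\<forall>j\<in>{1..m} - {b}. \<exists>l. follow x a (Tpath m j) = Some l \<and> snd l = j \<and> \<not> val (x l)) \<and>
     card (Gset m x b a) = m div 2"

definition g :: "nat \<Rightarrow> nat \<Rightarrow> (cell \<Rightarrow> sym) \<Rightarrow> bool" where
  "g n m x \<longleftrightarrow> (\<exists>b a. g_conds n m x b a)"

text \<open>Column j is good: g(x) = 1 and j \<in> G (b, a are unique when g_conds holds).\<close>
definition good_col :: "nat \<Rightarrow> nat \<Rightarrow> (cell \<Rightarrow> sym) \<Rightarrow> nat \<Rightarrow> bool" where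
  "good_col n m x j \<longleftrightarrow> (\<exists>b a. g_conds n m x b a \<and> j \<in> Gset m x b a)"

datatype qalg = Accept bool | Query cell "sym \<Rightarrow> qalg"

primrec run :: "qalg \<Rightarrow> (cell \<Rightarrow> sym) \<Rightarrow> bool" where
  "run (Accept b) = (\<lambda>x. b)"
| "run (Query c f) = (\<lambda>x. run (f (x c)) x)"

primrec nqueries :: "qalg \<Rightarrow> (cell \<Rightarrow> sym) \<Rightarrow> nat" where
  "nqueries (Accept b) = (\<lambda>x. 0)"
| "nqueries (Query c f) = (\<lambda>x. Suc (nqueries (f (x c)) x))"

primrec queries_in :: "cell set \<Rightarrow> qalg \<Rightarrow> (cell \<Rightarrow> sym) \<Rightarrow> bool" where
  "queries_in S (Accept b) = (\<lambda>x. True)"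
| "queries_in S (Query c f) = (\<lambda>x. c \<in> S \<and> queries_in S (f (x c)) x)"

end

theory Submission
  imports Defs
begin

(* The special element a of an input is recoverable from any good column j: the cell of column j
   reached from a along T(j) points back to a, so a is among the at most n bpoint targets of the
   cells of column j. A tournament with O(log m) queries per candidate singles a out: when a meets
   another non-blank cell c, the two lie in different columns, and following T from a to c's column
   ends in a 0-cell, whereas following T from c to a's column ends in the marked column, which holds
   only 1s. The survivor is then checked against conditions (1)-(4') by reading its column and the
   m - 1 leaves reached from it, which costs O(n + m log m) queries. *)

datatype 'a qprog = Done 'a | Ask cell "sym \<Rightarrow> 'a qprog"

primrec qrun :: "'a qprog \<Rightarrow> (cell \<Rightarrow> sym) \<Rightarrow> 'a" where
  "qrun (Done v) x = v"
| "qrun (Ask c f) x = qrun (f (x c)) x"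

primrec qcost :: "'a qprog \<Rightarrow> (cell \<Rightarrow> sym) \<Rightarrow> nat" where
  "qcost (Done v) x = 0"
| "qcost (Ask c f) x = Suc (qcost (f (x c)) x)"

primrec qwithin :: "cell set \<Rightarrow> 'a qprog \<Rightarrow> (cell \<Rightarrow> sym) \<Rightarrow> bool" where
  "qwithin S (Done v) x = True"
| "qwithin S (Ask c f) x = (c \<in> S \<and> qwithin S (f (x c)) x)"

primrec qbind :: "'a qprog \<Rightarrow> ('a \<Rightarrow> 'b qprog) \<Rightarrow> 'b qprog" where
  "qbind (Done v) h = h v"
| "qbind (Ask c f) h = Ask c (\<lambda>s. qbind (f s) h)"

primrec to_qalg :: "bool qprog \<Rightarrow> qalg" where
  "to_qalg (Done b) = Accept b"
| "to_qalg (Ask c f) = Query c (\<lambda>s. to_qalg (f s))"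

lemma run_to_qalg: "run (to_qalg p) x = qrun p x"
  and nqueries_to_qalg: "nqueries (to_qalg p) x = qcost p x"
  and queries_in_to_qalg: "queries_in S (to_qalg p) x = qwithin S p x"
  by (induction p) auto

lemma qrun_qbind [simp]: "qrun (qbind p h) x = qrun (h (qrun p x)) x"
  and qcost_qbind [simp]: "qcost (qbind p h) x = qcost p x + qcost (h (qrun p x)) x"
  and qwithin_qbind [simp]: "qwithin S (qbind p h) x = (qwithin S p x \<and> qwithin S (h (qrun p x)) x)"
  by (induction p) auto

definition ask :: "cell \<Rightarrow> sym qprog" where
  "ask c = Ask c Done"

lemma qrun_ask [simp]: "qrun (ask c) x = x c"
  and qcost_ask [simp]: "qcost (ask c) x = 1"
  and qwithin_ask [simp]: "qwithin S (ask c) x = (c \<in> S)"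
  by (auto simp: ask_def)

fun qmap :: "('k \<Rightarrow> 'v qprog) \<Rightarrow> 'k list \<Rightarrow> 'v list qprog" where
  "qmap f [] = Done []"
| "qmap f (y # ys) = qbind (f y) (\<lambda>v. qbind (qmap f ys) (\<lambda>vs. Done (v # vs)))"

lemma qrun_qmap [simp]: "qrun (qmap f ys) x = map (\<lambda>y. qrun (f y) x) ys"
  and qcost_qmap [simp]: "qcost (qmap f ys) x = (\<Sum>y\<leftarrow>ys. qcost (f y) x)"
  and qwithin_qmap [simp]: "qwithin S (qmap f ys) x = (\<forall>y\<in>set ys. qwithin S (f y) x)"
  by (induction ys) auto

definition qtable :: "('k \<Rightarrow> 'v qprog) \<Rightarrow> 'k list \<Rightarrow> ('k \<Rightarrow> 'v option) qprog" where
  "qtable f ks = qbind (qmap f ks) (\<lambda>vs. Done (map_of (zip ks vs)))"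

lemma qrun_qtable [simp]:
    "qrun (qtable f ks) x = (\<lambda>k. if k \<in> set ks then Some (qrun (f k) x) else None)"
  and qcost_qtable [simp]: "qcost (qtable f ks) x = (\<Sum>y\<leftarrow>ks. qcost (f y) x)"
  and qwithin_qtable [simp]: "qwithin S (qtable f ks) x = (\<forall>y\<in>set ks. qwithin S (f y) x)"
  by (simp_all add: qtable_def map_of_zip_map)

fun qfoldl :: "('s \<Rightarrow> 'k \<Rightarrow> 's qprog) \<Rightarrow> 's \<Rightarrow> 'k list \<Rightarrow> 's qprog" where
  "qfoldl f s [] = Done s"
| "qfoldl f s (y # ys) = qbind (f s y) (\<lambda>s'. qfoldl f s' ys)"

lemma qrun_qfoldl [simp]: "qrun (qfoldl f s ys) x = foldl (\<lambda>s y. qrun (f s y) x) s ys"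
  by (induction ys arbitrary: s) auto

lemma qfoldl_invariant:
  assumes step: "\<And>s y. I s \<Longrightarrow> y \<in> set ys \<Longrightarrow>
      I (qrun (f s y) x) \<and> qcost (f s y) x \<le> K \<and> qwithin S (f s y) x"
    and "I s"
  shows "qcost (qfoldl f s ys) x \<le> K * length ys \<and> qwithin S (qfoldl f s ys) x"
  using assms
proof (induction ys arbitrary: s)
  case (Cons y ys)
  then have "I (qrun (f s y) x)" "qcost (f s y) x \<le> K" "qwithin S (f s y) x" by auto
  moreover have "qcost (qfoldl f (qrun (f s y) x) ys) x \<le> K * length ys
      \<and> qwithin S (qfoldl f (qrun (f s y) x) ys) x"
    using Cons calculation(1) by auto
  ultimately show ?case by auto
qed simp

fun ask_follow :: "cell \<Rightarrow> bool list \<Rightarrow> cell option qprog" where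
  "ask_follow a [] = Done (Some a)"
| "ask_follow a (d # ds) = qbind (ask a) (\<lambda>s.
      case if d then rpoint s else lpoint s of None \<Rightarrow> Done None | Some c \<Rightarrow> ask_follow c ds)"

lemma valid_input_pointer:
  "valid_input n m x \<Longrightarrow> a \<in> grid n m \<Longrightarrow>
   (if d then rpoint (x a) else lpoint (x a)) = Some c \<Longrightarrow> c \<in> grid n m"
  unfolding valid_input_def valid_sym_def by (cases d) (metis, metis)

lemma follow_in_grid:
  "valid_input n m x \<Longrightarrow> a \<in> grid n m \<Longrightarrow> follow x a p = Some l \<Longrightarrow> l \<in> grid n m"
  by (induction p arbitrary: a)
    (auto split: option.splits if_splits dest: valid_input_pointer[where d=True] valid_input_pointer[where d=False])

lemma qrun_ask_follow [simp]: "qrun (ask_follow a p) x = follow x a p"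
  by (induction p arbitrary: a) (auto split: option.splits)

lemma qcost_ask_follow: "qcost (ask_follow a p) x \<le> length p"
  by (induction p arbitrary: a) (auto split: option.splits)

lemma qwithin_ask_follow:
  "valid_input n m x \<Longrightarrow> a \<in> grid n m \<Longrightarrow> qwithin (grid n m) (ask_follow a p) x"
  by (induction p arbitrary: a)
    (auto split: option.splits if_splits dest: valid_input_pointer[where d=True] valid_input_pointer[where d=False])

fun height :: "btree \<Rightarrow> nat" where
  "height Lf = 0"
| "height (Nd l r) = Suc (max (height l) (height r))"

lemma length_leaf_path_le_height: "p \<in> set (leaf_paths t) \<Longrightarrow> length p \<le> height t"
  by (induction t arbitrary: p) fastforce+

lemma height_ctree: "height (ctree k r) \<le> Suc k"
  by (induction k arbitrary: r) (auto simp: max_def)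

lemma length_leaf_paths_ctree: "length (leaf_paths (ctree k r)) = 2 ^ k + min r (2 ^ k)"
  by (induction k arbitrary: r) (auto simp: min_def)

lemma
  assumes "m \<ge> 1"
  shows power_tdepth_le: "2 ^ tdepth m \<le> m"
    and less_power_Suc_tdepth: "m < 2 ^ Suc (tdepth m)"
proof -
  have bound: "y \<le> m" if "(2::nat) ^ y \<le> m" for y
    using less_exp[of y] that by linarith
  have "(2::nat) ^ 0 \<le> m" using assms by simp
  then show "2 ^ tdepth m \<le> m"
    unfolding tdepth_def by (rule GreatestI_nat[where P="\<lambda>k. (2::nat) ^ k \<le> m", OF _ bound])
  show "m < 2 ^ Suc (tdepth m)"
  proof (rule ccontr)
    assume "\<not> m < 2 ^ Suc (tdepth m)"
    then have "Suc (tdepth m) \<le> tdepth m"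
      unfolding tdepth_def not_less by (rule Greatest_le_nat[where P="\<lambda>k. (2::nat) ^ k \<le> m", OF _ bound])
    then show False by simp
  qed
qed

lemma length_Tpath_le: assumes "j \<in> {1..m}" shows "length (Tpath m j) \<le> Suc (tdepth m)"
proof -
  have "m \<ge> 1" using assms by simp
  then have "length (leaf_paths (Ttree m)) = m"
    using power_tdepth_le[of m] less_power_Suc_tdepth[of m]
    unfolding Ttree_def length_leaf_paths_ctree by (auto simp: min_def)
  then have "length (Tpath m j) \<le> height (Ttree m)"
    using assms unfolding Tpath_def by (intro length_leaf_path_le_height) auto
  also have "\<dots> \<le> Suc (tdepth m)" unfolding Ttree_def by (rule height_ctree)
  finally show ?thesis .
qed

lemma tdepth_le_log: assumes "1 \<le> m" "m \<le> N" shows "real (tdepth m) \<le> log 2 (real N)"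
proof -
  have "(2::real) ^ tdepth m \<le> real N"
    using power_tdepth_le[OF assms(1)] assms(2) by (metis of_nat_le_iff of_nat_numeral of_nat_power order_trans)
  then have "log 2 ((2::real) ^ tdepth m) \<le> log 2 (real N)"
    using assms by (subst log_le_cancel_iff) auto
  then show ?thesis by (simp add: log_nat_power)
qed

section \<open>Finding the special element\<close>

abbreviation blank :: sym where
  "blank \<equiv> (True, None, None, None)"

lemma g_condsD:
  assumes "g_conds n m x b a"
  shows "snd a = b" "a \<in> grid n m" "x a \<noteq> blank"
    and "\<And>i. i \<in> {1..n} \<Longrightarrow> val (x (i, b))"
    and "\<And>c. c \<in> grid n m \<Longrightarrow> snd c = b \<Longrightarrow> x c \<noteq> blank \<Longrightarrow> c = a"
    and "\<And>j. j \<in> {1..m} - {b} \<Longrightarrow> \<exists>l. follow x a (Tpath m j) = Some l \<and> snd l = j \<and> \<not> val (x l)"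
proof -
  have b: "b \<in> {1..m}" and mk: "marked_col n x b" and a: "a \<in> {1..n} \<times> {b}" "x a \<noteq> blank"
    and uniq: "\<forall>c\<in>{1..n} \<times> {b}. x c \<noteq> blank \<longrightarrow> c = a"
    and paths: "\<forall>j\<in>{1..m} - {b}. \<exists>l. follow x a (Tpath m j) = Some l \<and> snd l = j \<and> \<not> val (x l)"
    using assms unfolding g_conds_def by blast+
  show "snd a = b" "a \<in> grid n m" "x a \<noteq> blank" using a b by (auto simp: grid_def)
  show "\<And>i. i \<in> {1..n} \<Longrightarrow> val (x (i, b))" using mk by (simp add: marked_col_def)
  show "\<And>c. c \<in> grid n m \<Longrightarrow> snd c = b \<Longrightarrow> x c \<noteq> blank \<Longrightarrow> c = a"
    using uniq by (auto simp: grid_def)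
  show "\<And>j. j \<in> {1..m} - {b} \<Longrightarrow> \<exists>l. follow x a (Tpath m j) = Some l \<and> snd l = j \<and> \<not> val (x l)"
    using paths by blast
qed

definition duel :: "nat \<Rightarrow> (cell \<Rightarrow> sym) \<Rightarrow> cell option \<Rightarrow> cell \<Rightarrow> cell option" where
  "duel m x champ d = (if x d = blank then champ else
     (case champ of
        None \<Rightarrow> Some d
      | Some c \<Rightarrow>
          if c = d then Some c
          else if snd c = snd d then None
          else (case follow x c (Tpath m (snd d)) of
                  None \<Rightarrow> Some d
                | Some l \<Rightarrow> if snd l = snd d \<and> \<not> val (x l) then Some c else Some d)))"

definition ask_duel :: "nat \<Rightarrow> cell option \<Rightarrow> cell \<Rightarrow> cell option qprog" where
  "ask_duel m champ d = qbind (ask d) (\<lambda>sd. if sd = blank then Done champ else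
     (case champ of
        None \<Rightarrow> Done (Some d)
      | Some c \<Rightarrow>
          if c = d then Done (Some c)
          else if snd c = snd d then Done None
          else qbind (ask_follow c (Tpath m (snd d))) (\<lambda>r. case r of
                  None \<Rightarrow> Done (Some d)
                | Some l \<Rightarrow>
                    if snd l = snd d
                    then qbind (ask l) (\<lambda>sl. Done (if \<not> val sl then Some c else Some d))
                    else Done (Some d))))"

lemma qrun_ask_duel [simp]: "qrun (ask_duel m champ d) x = duel m x champ d"
  unfolding ask_duel_def duel_def by (auto split: option.splits)

lemma qcost_ask_duel: "qcost (ask_duel m champ d) x \<le> 2 + length (Tpath m (snd d))"
  using qcost_ask_follow[of _ "Tpath m (snd d)" x]
  unfolding ask_duel_def by (auto split: option.splits simp: le_SucI)

definition admissible :: "nat \<Rightarrow> nat \<Rightarrow> (cell \<Rightarrow> sym) \<Rightarrow> cell option \<Rightarrow> bool" where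
  "admissible n m x champ \<longleftrightarrow> (\<forall>c. champ = Some c \<longrightarrow> c \<in> grid n m \<and> x c \<noteq> blank)"

lemma admissible_duel:
  "d \<in> grid n m \<Longrightarrow> admissible n m x champ \<Longrightarrow> admissible n m x (duel m x champ d)"
  unfolding admissible_def duel_def by (auto split: option.splits)

lemma admissible_foldl_duel:
  "set ds \<subseteq> grid n m \<Longrightarrow> admissible n m x champ \<Longrightarrow> admissible n m x (foldl (duel m x) champ ds)"
proof (induction ds arbitrary: champ)
  case (Cons d ds)
  then show ?case using admissible_duel[of d n m x champ] by simp
qed simp

lemma qwithin_ask_duel:
  "valid_input n m x \<Longrightarrow> d \<in> grid n m \<Longrightarrow> admissible n m x champ \<Longrightarrow>
   qwithin (grid n m) (ask_duel m champ d) x"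
  unfolding ask_duel_def admissible_def
  by (auto simp: qwithin_ask_follow split: option.splits dest: follow_in_grid)

lemma duel_special_defends:
  assumes gc: "g_conds n m x b a" and d: "d \<in> grid n m"
  shows "duel m x (Some a) d = Some a"
proof (cases "x d = blank \<or> d = a")
  case False
  then have "snd d \<noteq> b" using g_condsD(5)[OF gc d] by blast
  moreover have "snd d \<in> {1..m}" using d by (auto simp: grid_def)
  ultimately obtain l where "follow x a (Tpath m (snd d)) = Some l" "snd l = snd d" "\<not> val (x l)"
    using g_condsD(6)[OF gc] by blast
  then show ?thesis using False \<open>snd d \<noteq> b\<close> g_condsD(1)[OF gc] by (simp add: duel_def)
qed (auto simp: duel_def)

lemma duel_special_wins:
  assumes gc: "g_conds n m x b a" and v: "valid_input n m x" and champ: "admissible n m x champ"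
  shows "duel m x champ a = Some a"
proof (cases champ)
  case (Some c)
  show ?thesis
  proof (cases "c = a")
    case False
    have c: "c \<in> grid n m" "x c \<noteq> blank" using champ Some by (auto simp: admissible_def)
    then have "snd c \<noteq> snd a" using g_condsD(1,5)[OF gc] False by blast
    moreover have "snd l \<noteq> snd a \<or> val (x l)" if "follow x c (Tpath m (snd a)) = Some l" for l
    proof -
      have "l \<in> grid n m" using follow_in_grid[OF v c(1) that] .
      then show ?thesis using g_condsD(1,4)[OF gc] by (cases l) (auto simp: grid_def)
    qed
    ultimately show ?thesis using Some False g_condsD(3)[OF gc]
      by (auto simp: duel_def split: option.splits)
  qed (use Some g_condsD(3)[OF gc] in \<open>simp add: duel_def\<close>)
qed (use g_condsD(3)[OF gc] in \<open>simp add: duel_def\<close>)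

lemma foldl_duel_eq_special:
  assumes gc: "g_conds n m x b a" and v: "valid_input n m x"
    and "set ds \<subseteq> grid n m" "admissible n m x champ" "champ = Some a \<or> a \<in> set ds"
  shows "foldl (duel m x) champ ds = Some a"
  using assms(3-)
proof (induction ds arbitrary: champ)
  case (Cons d ds)
  have "admissible n m x (duel m x champ d)" using Cons.prems admissible_duel by auto
  moreover have "duel m x champ d = Some a \<or> a \<in> set ds"
    using Cons.prems duel_special_defends[OF gc, of d] duel_special_wins[OF gc v, of champ] by auto
  ultimately show ?case using Cons by auto
qed simp

definition tournament :: "nat \<Rightarrow> cell list \<Rightarrow> cell option qprog" where
  "tournament m ds = qfoldl (ask_duel m) None ds"

lemma qrun_tournament: "qrun (tournament m ds) x = foldl (duel m x) None ds"
  by (simp add: tournament_def)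

lemma tournament_cost_within:
  assumes v: "valid_input n m x" and ds: "set ds \<subseteq> grid n m"
  shows "qcost (tournament m ds) x \<le> (tdepth m + 3) * length ds \<and> qwithin (grid n m) (tournament m ds) x"
  unfolding tournament_def
proof (rule qfoldl_invariant[where I="admissible n m x"])
  fix champ d assume champ: "admissible n m x champ" and "d \<in> set ds"
  then have d: "d \<in> grid n m" using ds by auto
  then have "length (Tpath m (snd d)) \<le> Suc (tdepth m)"
    by (intro length_Tpath_le) (auto simp: grid_def)
  then show "admissible n m x (qrun (ask_duel m champ d) x) \<and> qcost (ask_duel m champ d) x \<le> tdepth m + 3
      \<and> qwithin (grid n m) (ask_duel m champ d) x"
    using qcost_ask_duel[of m champ d x] qwithin_ask_duel[OF v d champ] admissible_duel[OF d champ] by simp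
qed (simp add: admissible_def)

section \<open>Verifying a candidate\<close>

definition column_cells :: "nat \<Rightarrow> nat \<Rightarrow> cell list" where
  "column_cells n b = map (\<lambda>i. (i, b)) [1..<Suc n]"

lemma set_column_cells [simp]: "set (column_cells n b) = {1..n} \<times> {b}"
  by (auto simp: column_cells_def)

lemma length_column_cells [simp]: "length (column_cells n b) = n"
  by (simp add: column_cells_def)

lemma column_cells_in_grid: "b \<in> {1..m} \<Longrightarrow> set (column_cells n b) \<subseteq> grid n m"
  by (auto simp: grid_def)

definition other_columns :: "nat \<Rightarrow> nat \<Rightarrow> nat list" where
  "other_columns m b = filter (\<lambda>j. j \<noteq> b) [1..<Suc m]"

lemma set_other_columns [simp]: "set (other_columns m b) = {1..m} - {b}"
  by (auto simp: other_columns_def)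

lemma length_other_columns_le: "length (other_columns m b) \<le> m"
  unfolding other_columns_def by (metis length_filter_le length_upt diff_Suc_1)

definition leaf :: "nat \<Rightarrow> (cell \<Rightarrow> sym) \<Rightarrow> cell \<Rightarrow> nat \<Rightarrow> (cell \<times> sym) option" where
  "leaf m x a j = map_option (\<lambda>l. (l, x l)) (follow x a (Tpath m j))"

definition ask_leaf :: "nat \<Rightarrow> cell \<Rightarrow> nat \<Rightarrow> (cell \<times> sym) option qprog" where
  "ask_leaf m a j = qbind (ask_follow a (Tpath m j)) (\<lambda>r. case r of
      None \<Rightarrow> Done None
    | Some l \<Rightarrow> qbind (ask l) (\<lambda>s. Done (Some (l, s))))"

lemma qrun_ask_leaf [simp]: "qrun (ask_leaf m a j) x = leaf m x a j"
  unfolding ask_leaf_def leaf_def by (auto split: option.splits)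

lemma qcost_ask_leaf: "qcost (ask_leaf m a j) x \<le> Suc (length (Tpath m j))"
  using qcost_ask_follow[of a "Tpath m j" x] unfolding ask_leaf_def by (auto split: option.splits)

lemma qwithin_ask_leaf: "valid_input n m x \<Longrightarrow> a \<in> grid n m \<Longrightarrow> qwithin (grid n m) (ask_leaf m a j) x"
  unfolding ask_leaf_def by (auto simp: qwithin_ask_follow split: option.splits dest: follow_in_grid)

definition leaf_Gset :: "nat \<Rightarrow> cell \<Rightarrow> (nat \<Rightarrow> (cell \<times> sym) option) \<Rightarrow> nat set" where
  "leaf_Gset m a F = {j \<in> {1..m} - {snd a}. \<exists>l s. F j = Some (l, s) \<and> bpoint s = Some a}"

(* Conditions (1)-(4') for the candidate a, read off a's column of X and the leaves F reached
   from a. That no other column is marked is not checked: it follows from condition (3). *)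
definition certifies ::
    "nat \<Rightarrow> nat \<Rightarrow> nat \<Rightarrow> cell \<Rightarrow> (cell \<Rightarrow> sym) \<Rightarrow> (nat \<Rightarrow> (cell \<times> sym) option) \<Rightarrow> bool" where
  "certifies n m j a X F \<longleftrightarrow>
     marked_col n X (snd a) \<and> X a \<noteq> blank \<and>
     (\<forall>c\<in>{1..n} \<times> {snd a}. X c \<noteq> blank \<longrightarrow> c = a) \<and>
     (\<forall>j'\<in>{1..m} - {snd a}. \<exists>l s. F j' = Some (l, s) \<and> snd l = j' \<and> \<not> val s) \<and>
     card (leaf_Gset m a F) = m div 2 \<and> j \<in> leaf_Gset m a F"

lemma certifies_cong:
  assumes a: "a \<in> grid n m"
    and X: "\<And>c. c \<in> {1..n} \<times> {snd a} \<Longrightarrow> X c = X' c"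
    and F: "\<And>j'. j' \<in> {1..m} - {snd a} \<Longrightarrow> F j' = F' j'"
  shows "certifies n m j a X F = certifies n m j a X' F'"
proof -
  have "a \<in> {1..n} \<times> {snd a}" using a by (auto simp: grid_def mem_Times_iff)
  moreover have "leaf_Gset m a F = leaf_Gset m a F'" using F by (auto simp: leaf_Gset_def)
  moreover have "marked_col n X (snd a) = marked_col n X' (snd a)" using X by (simp add: marked_col_def)
  ultimately show ?thesis using X F unfolding certifies_def by simp
qed

lemma marked_col_unique_if_leaves_unmarked:
  assumes v: "valid_input n m x" and a: "a \<in> grid n m"
    and leaves: "\<forall>j\<in>{1..m} - {b}. \<exists>l. follow x a (Tpath m j) = Some l \<and> snd l = j \<and> \<not> val (x l)"
    and b': "b' \<in> {1..m}" "marked_col n x b'"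
  shows "b' = b"
proof (rule ccontr)
  assume "b' \<noteq> b"
  then obtain l where l: "follow x a (Tpath m b') = Some l" "snd l = b'" "\<not> val (x l)"
    using leaves b' by blast
  have "l \<in> grid n m" using follow_in_grid[OF v a l(1)] .
  then show False using l b' by (cases l) (auto simp: grid_def marked_col_def)
qed

lemma certifies_iff_good:
  assumes v: "valid_input n m x" and a: "a \<in> grid n m"
  shows "certifies n m j a x (leaf m x a) \<longleftrightarrow> g_conds n m x (snd a) a \<and> j \<in> Gset m x (snd a) a"
proof -
  define b where "b = snd a"
  define leaves where
    "leaves = (\<forall>j\<in>{1..m} - {b}. \<exists>l. follow x a (Tpath m j) = Some l \<and> snd l = j \<and> \<not> val (x l))"
  have b: "b \<in> {1..m}" "a \<in> {1..n} \<times> {b}" using a by (auto simp: grid_def b_def mem_Times_iff)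
  have "(\<exists>l s. leaf m x a j = Some (l, s) \<and> snd l = j \<and> \<not> val s)
      \<longleftrightarrow> (\<exists>l. follow x a (Tpath m j) = Some l \<and> snd l = j \<and> \<not> val (x l))" for j
    by (cases "follow x a (Tpath m j)") (auto simp: leaf_def)
  then have leaves_iff:
    "(\<forall>j\<in>{1..m} - {b}. \<exists>l s. leaf m x a j = Some (l, s) \<and> snd l = j \<and> \<not> val s) = leaves"
    unfolding leaves_def by presburger
  have Gset_eq: "leaf_Gset m a (leaf m x a) = Gset m x b a" if leaves
  proof -
    have "(\<exists>l s. leaf m x a j = Some (l, s) \<and> bpoint s = Some a)
        \<longleftrightarrow> bpoint (x (the (follow x a (Tpath m j)))) = Some a" if "j \<in> {1..m} - {b}" for j
      using that \<open>leaves\<close> unfolding leaves_def leaf_def by fastforce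
    then show ?thesis unfolding leaf_Gset_def Gset_def b_def[symmetric] by blast
  qed
  have unique: "leaves \<Longrightarrow> \<forall>b'\<in>{1..m}. marked_col n x b' \<longrightarrow> b' = b"
    unfolding leaves_def using marked_col_unique_if_leaves_unmarked[OF v a] by blast
  show ?thesis
  proof (cases leaves)
    case True
    show ?thesis
      unfolding certifies_def g_conds_def b_def[symmetric] leaves_iff leaves_def[symmetric] Gset_eq[OF True]
      using b unique[OF True] True by blast
  next
    case False
    then show ?thesis
      unfolding certifies_def g_conds_def b_def[symmetric] leaves_iff leaves_def[symmetric] by blast
  qed
qed

definition verify_prog :: "nat \<Rightarrow> nat \<Rightarrow> nat \<Rightarrow> cell \<Rightarrow> bool qprog" where
  "verify_prog n m j a =
     qbind (qtable ask (column_cells n (snd a))) (\<lambda>T.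
     qbind (qtable (ask_leaf m a) (other_columns m (snd a))) (\<lambda>L.
     Done (certifies n m j a (the \<circ> T) (the \<circ> L))))"

lemma qrun_verify_prog:
  assumes v: "valid_input n m x" and a: "a \<in> grid n m"
  shows "qrun (verify_prog n m j a) x \<longleftrightarrow> g_conds n m x (snd a) a \<and> j \<in> Gset m x (snd a) a"
proof -
  have "qrun (verify_prog n m j a) x = certifies n m j a
      (\<lambda>c. the (if c \<in> set (column_cells n (snd a)) then Some (x c) else None))
      (\<lambda>j'. the (if j' \<in> set (other_columns m (snd a)) then Some (leaf m x a j') else None))"
    unfolding verify_prog_def by (simp add: comp_def cong: if_cong del: set_column_cells set_other_columns)
  also have "\<dots> = certifies n m j a x (leaf m x a)"
    using a by (rule certifies_cong) simp_all
  finally show ?thesis using certifies_iff_good[OF v a] by simp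
qed

lemma qcost_verify_prog: "qcost (verify_prog n m j a) x \<le> n + m * (tdepth m + 2)"
proof -
  have "(\<Sum>j'\<leftarrow>other_columns m (snd a). qcost (ask_leaf m a j') x)
      \<le> (\<Sum>j'\<leftarrow>other_columns m (snd a). tdepth m + 2)"
    using qcost_ask_leaf length_Tpath_le
    by (intro sum_list_mono) (metis Suc_le_mono add_2_eq_Suc' le_trans set_other_columns DiffD1)
  also have "\<dots> \<le> m * (tdepth m + 2)"
    unfolding sum_list_triv of_nat_id by (rule mult_le_mono1[OF length_other_columns_le])
  finally show ?thesis by (simp add: verify_prog_def sum_list_triv)
qed

lemma qwithin_verify_prog:
  assumes "valid_input n m x" and "a \<in> grid n m"
  shows "qwithin (grid n m) (verify_prog n m j a) x"
  using assms qwithin_ask_leaf[OF assms] by (auto simp: verify_prog_def grid_def mem_Times_iff)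

definition bpointers :: "sym list \<Rightarrow> cell list" where
  "bpointers = List.map_filter bpoint"

lemma set_bpointers: "set (bpointers ss) = {c. \<exists>s\<in>set ss. bpoint s = Some c}"
  by (induction ss) (auto simp: bpointers_def split: option.splits)

lemma length_bpointers_le: "length (bpointers ss) \<le> length ss"
  by (induction ss) (auto simp: bpointers_def split: option.splits)

lemma bpointers_column_in_grid:
  assumes "valid_input n m x" and "j \<in> {1..m}"
  shows "set (bpointers (map x (column_cells n j))) \<subseteq> grid n m"
proof
  fix c assume "c \<in> set (bpointers (map x (column_cells n j)))"
  then obtain d where "d \<in> set (column_cells n j)" "bpoint (x d) = Some c"
    by (auto simp: set_bpointers)
  moreover have "d \<in> grid n m" using calculation(1) column_cells_in_grid[OF assms(2)] by blast
  ultimately show "c \<in> grid n m" using assms(1) unfolding valid_input_def valid_sym_def by blast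
qed

lemma special_in_bpointers:
  assumes v: "valid_input n m x" and gc: "g_conds n m x b a" and j: "j \<in> Gset m x b a"
  shows "a \<in> set (bpointers (map x (column_cells n j)))"
proof -
  have "j \<in> {1..m} - {b}" and bp: "bpoint (x (the (follow x a (Tpath m j)))) = Some a"
    using j by (auto simp: Gset_def)
  then obtain l where l: "follow x a (Tpath m j) = Some l" "snd l = j"
    using g_condsD(6)[OF gc] by blast
  then have "l \<in> set (column_cells n j)"
    using follow_in_grid[OF v g_condsD(2)[OF gc] l(1)] by (cases l) (auto simp: grid_def)
  then show ?thesis using bp l(1) by (force simp: set_bpointers)
qed

definition good_col_prog :: "nat \<Rightarrow> nat \<Rightarrow> nat \<Rightarrow> bool qprog" where
  "good_col_prog n m j =
     qbind (qmap ask (column_cells n j)) (\<lambda>col.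
     qbind (tournament m (bpointers col)) (\<lambda>champ.
     case champ of None \<Rightarrow> Done False | Some a \<Rightarrow> verify_prog n m j a))"

lemma qrun_good_col_prog:
  assumes v: "valid_input n m x" and j: "j \<in> {1..m}"
  shows "qrun (good_col_prog n m j) x \<longleftrightarrow> good_col n m x j"
proof -
  define ds where "ds = bpointers (map x (column_cells n j))"
  define champ where "champ = foldl (duel m x) None ds"
  have ds: "set ds \<subseteq> grid n m" unfolding ds_def using bpointers_column_in_grid[OF v j] .
  have champ: "admissible n m x champ"
    unfolding champ_def by (rule admissible_foldl_duel[OF ds]) (simp add: admissible_def)
  have run: "qrun (good_col_prog n m j) x
      = (case champ of None \<Rightarrow> False | Some a \<Rightarrow> qrun (verify_prog n m j a) x)"
    by (simp add: good_col_prog_def qrun_tournament ds_def champ_def comp_def split: option.split)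
  show ?thesis
  proof
    assume "qrun (good_col_prog n m j) x"
    then obtain a where "champ = Some a" "qrun (verify_prog n m j a) x"
      unfolding run by (auto split: option.splits)
    then show "good_col n m x j"
      using qrun_verify_prog[OF v] champ unfolding good_col_def admissible_def by blast
  next
    assume "good_col n m x j"
    then obtain b a where gc: "g_conds n m x b a" and "j \<in> Gset m x b a"
      unfolding good_col_def by blast
    then have "a \<in> set ds" unfolding ds_def using special_in_bpointers[OF v] by blast
    then have "champ = Some a"
      unfolding champ_def using foldl_duel_eq_special[OF gc v ds] by (simp add: admissible_def)
    then show "qrun (good_col_prog n m j) x"
      unfolding run using qrun_verify_prog[OF v g_condsD(2)[OF gc]] g_condsD(1)[OF gc] gc
        \<open>j \<in> Gset m x b a\<close> by simp
  qed
qed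

lemma good_col_prog_cost_within:
  assumes v: "valid_input n m x" and j: "j \<in> {1..m}"
  shows "qcost (good_col_prog n m j) x \<le> (n + m) * (tdepth m + 5)
    \<and> qwithin (grid n m) (good_col_prog n m j) x"
proof -
  define ds where "ds = bpointers (map x (column_cells n j))"
  define champ where "champ = qrun (tournament m ds) x"
  have ds: "set ds \<subseteq> grid n m" unfolding ds_def using bpointers_column_in_grid[OF v j] .
  have "qcost (tournament m ds) x \<le> (tdepth m + 3) * length ds"
    using tournament_cost_within[OF v ds] by blast
  also have "\<dots> \<le> (tdepth m + 3) * n"
    unfolding ds_def using length_bpointers_le[of "map x (column_cells n j)"] by simp
  finally have tour_cost: "qcost (tournament m ds) x \<le> (tdepth m + 3) * n" .
  have champ: "\<And>a. champ = Some a \<Longrightarrow> a \<in> grid n m"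
    using admissible_foldl_duel[OF ds, of x None]
    by (simp add: champ_def qrun_tournament admissible_def)
  define fin where "fin = (case champ of None \<Rightarrow> Done False | Some a \<Rightarrow> verify_prog n m j a)"
  have fin: "qcost fin x \<le> n + m * (tdepth m + 2)" "qwithin (grid n m) fin x"
    unfolding fin_def using champ qcost_verify_prog qwithin_verify_prog[OF v]
    by (auto split: option.splits)
  have cost: "qcost (good_col_prog n m j) x = n + qcost (tournament m ds) x + qcost fin x"
    by (simp add: good_col_prog_def ds_def champ_def fin_def comp_def sum_list_triv)
  have within: "qwithin (grid n m) (good_col_prog n m j) x \<longleftrightarrow>
      (\<forall>c\<in>set (column_cells n j). c \<in> grid n m) \<and>
      qwithin (grid n m) (tournament m ds) x \<and> qwithin (grid n m) fin x"
    by (simp add: good_col_prog_def ds_def champ_def fin_def comp_def del: set_column_cells)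
  show ?thesis
    unfolding cost within
    using tour_cost fin tournament_cost_within[OF v ds] column_cells_in_grid[OF j, of n]
    by (auto simp: algebra_simps simp del: set_column_cells)
qed

theorem lemma13:
  "\<exists>(C::real) (k::nat). \<forall>n m. n \<ge> 1 \<longrightarrow> m \<ge> 1 \<longrightarrow> even m \<longrightarrow>
     (\<forall>j\<in>{1..m}. \<exists>A::qalg.
        (\<forall>x. valid_input n m x \<longrightarrow>
           queries_in (grid n m) A x \<and>
           real (nqueries A x) \<le> C * real (n + m) * (log 2 (real (n + m))) ^ k \<and>
           (run A x \<longleftrightarrow> good_col n m x j)))"
proof (intro exI[of _ "6::real"] exI[of _ "1::nat"] allI impI ballI)
  fix n m j :: nat
  assume n: "n \<ge> 1" and m: "m \<ge> 1" and "even m" and j: "j \<in> {1..m}"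
  define L where "L = log 2 (real (n + m))"
  have "1 \<le> L" using n m by (simp add: L_def)
  moreover have "real (tdepth m) \<le> L" unfolding L_def using m by (intro tdepth_le_log) auto
  ultimately have "real (n + m) * (real (tdepth m) + 5) \<le> real (n + m) * (6 * L)"
    by (intro mult_left_mono) auto
  then have bound: "real ((n + m) * (tdepth m + 5)) \<le> 6 * real (n + m) * L ^ 1"
    by (simp add: algebra_simps)
  show "\<exists>A. \<forall>x. valid_input n m x \<longrightarrow> queries_in (grid n m) A x \<and>
      real (nqueries A x) \<le> 6 * real (n + m) * log 2 (real (n + m)) ^ 1 \<and> (run A x \<longleftrightarrow> good_col n m x j)"
  proof (intro exI[of _ "to_qalg (good_col_prog n m j)"] allI impI)
    fix x assume v: "valid_input n m x"
    have "real (qcost (good_col_prog n m j) x) \<le> real ((n + m) * (tdepth m + 5))"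
      using good_col_prog_cost_within[OF v j] of_nat_mono by blast
    then show "queries_in (grid n m) (to_qalg (good_col_prog n m j)) x \<and>
        real (nqueries (to_qalg (good_col_prog n m j)) x) \<le> 6 * real (n + m) * log 2 (real (n + m)) ^ 1 \<and>
        (run (to_qalg (good_col_prog n m j)) x \<longleftrightarrow> good_col n m x j)"
      using good_col_prog_cost_within[OF v j] qrun_good_col_prog[OF v j] bound
      unfolding run_to_qalg nqueries_to_qalg queries_in_to_qalg L_def by linarith
  qed
qed

end
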